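(* For the deterministic system described in the context, the recurrence time $\zeta_n$ is finite for all sufficiently large $n$ and \[ \lim_{n\to\infty}\frac{\zeta_n}{\log n}=\frac{\min\{1-\beta,\alpha\}}{\lambda_1}. \]
   Context: Fix constants $r_0,d_0\ge 0$ with $\lambda_0:=r_0-d_0<0$, $d_1>0$, $k>1$, $\alpha\in(0,1)$, $\beta\in(0,1)$. Let $f:[0,\infty)^2\to[0,\infty)$ satisfy: (A1) $f$ is Lipschitz continuous; (A2) $f(x,y)=r_1$ when $x+y=0$ and $f(x,y)=d_1$ when $x+y=1$, where $r_1:=f(0,0)>d_1$; (A3) $f(x,y)=\Phi(x+y)$ for some non-increasing function $\Phi:[0,\infty)\to[0,\infty)$; (A4) $f(x,y)\to0$ as $x\to\infty$ and as $y\to\infty$; (A5) $f(x,y)\ge \lambda_1(1-(x+y))+d_1$ for all $x,y\ge0$, where $\lambda_1:=r_1-d_1>0$. Put $\phi(x,y):=f(x,y)-d_1$. For each integer $n\ge1$ let $K=K(n):=kn$ and let $(y_0,y_1,y_\beta)$ solve \[ \dot y_0=\lambda_0 y_0,\qquad \dot y_1=\phi(y_0,y_1)\,y_1+n^{-\alpha}y_0,\qquad \dot y_\beta=\phi(y_0,y_1)\,y_\beta, \] with $(y_0(0),y_1(0),y_\beta(0))=(n/K,\,n^\beta/K,\,n^\beta/K)$. Define the deterministic recurrence time $\zeta_n:=\inf\{t>0: y_1(t)=n/K\}$. *)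

theory Defs
  imports "HOL-Analysis.Analysis"
begin

definition recurrence_time :: "(real \<Rightarrow> real) \<Rightarrow> real \<Rightarrow> real" where
  "recurrence_time y c = Inf {t. t > 0 \<and> y t = c}"

end

theory Submission
  imports Defs
begin

text \<open>Write v = y0 and u = y1. Then v(t) = e^{\<lambda>0 t}/k, and u solves u' = \<phi> u + a v with
  a = n^{-\<alpha>}, u(0) = b = n^{\<beta>-1}/k, where \<phi> = f(v, u) - d1 satisfies
  \<lambda>1 (1 - (v + u)) \<le> \<phi> \<le> \<lambda>1 by (A5) and (A3). Comparison with u' \<le> \<lambda>1 u + a/k gives
  u(t) \<le> B e^{\<lambda>1 t} with B = b + a/(k \<lambda>1), so u cannot reach 1/k before (-ln B - ln k)/\<lambda>1.
  Conversely, integrating \<phi> \<ge> \<lambda>1 (1 - v - B e^{\<lambda>1 t}) shows that u has reached a level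
  independent of n at the time -ln B/\<lambda>1; from then on v is small, u grows at a fixed
  exponential rate and hits 1/k after a bounded delay. Hence \<zeta>_n = -ln B_n/\<lambda>1 + O(1),
  and B_n is comparable to n^{-min(1-\<beta>, \<alpha>)}.\<close>

lemma has_real_derivative_nonneg_imp_le:
  fixes g g' :: "real \<Rightarrow> real"
  assumes "a \<le> b" "{a..b} \<subseteq> S"
    and deriv: "\<And>t. t \<in> {a..b} \<Longrightarrow> (g has_real_derivative g' t) (at t within S)"
    and nonneg: "\<And>t. t \<in> {a..b} \<Longrightarrow> g' t \<ge> 0"
  shows "g a \<le> g b"
proof -
  have "(g has_derivative (\<lambda>h. g' t * h)) (at t within {a..b})" if "a \<le> t" "t \<le> b" for t
    using DERIV_subset[OF deriv \<open>{a..b} \<subseteq> S\<close>] that by (simp add: has_field_derivative_def)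
  then obtain t where "t \<in> {a..b}" "g b - g a = g' t * (b - a)"
    using mvt_very_simple[OF \<open>a \<le> b\<close>, of g "\<lambda>t h. g' t * h"] by blast
  with nonneg[of t] \<open>a \<le> b\<close> show ?thesis
    by (metis diff_ge_0_iff_ge zero_le_mult_iff)
qed

lemma linear_differential_inequality_lower:
  fixes g g' P p :: "real \<Rightarrow> real"
  assumes "a \<le> b" "{a..b} \<subseteq> S"
    and g: "\<And>t. t \<in> {a..b} \<Longrightarrow> (g has_real_derivative g' t) (at t within S)"
    and P: "\<And>t. t \<in> {a..b} \<Longrightarrow> (P has_real_derivative p t) (at t within S)"
    and ineq: "\<And>t. t \<in> {a..b} \<Longrightarrow> p t * g t \<le> g' t"
  shows "g a * exp (P b - P a) \<le> g b"
proof -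
  have "((\<lambda>t. g t * exp (- P t)) has_real_derivative (g' t - p t * g t) * exp (- P t))
          (at t within S)" if "t \<in> {a..b}" for t
    using DERIV_mult[OF g[OF that] DERIV_chain2[OF DERIV_exp DERIV_minus[OF P[OF that]]]]
    by (simp add: algebra_simps)
  then have "g a * exp (- P a) \<le> g b * exp (- P b)"
    using ineq by (intro has_real_derivative_nonneg_imp_le[OF assms(1,2)]) auto
  then have "g a * exp (- P a) * exp (P b) \<le> g b * exp (- P b) * exp (P b)"
    by (simp add: mult_right_mono)
  then show ?thesis
    by (simp add: mult.assoc exp_add[symmetric] exp_diff)
qed

lemma linear_differential_inequality_upper:
  fixes g g' P p :: "real \<Rightarrow> real"
  assumes "a \<le> b" "{a..b} \<subseteq> S"
    and g: "\<And>t. t \<in> {a..b} \<Longrightarrow> (g has_real_derivative g' t) (at t within S)"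
    and P: "\<And>t. t \<in> {a..b} \<Longrightarrow> (P has_real_derivative p t) (at t within S)"
    and ineq: "\<And>t. t \<in> {a..b} \<Longrightarrow> g' t \<le> p t * g t"
  shows "g b \<le> g a * exp (P b - P a)"
proof -
  have "(\<lambda>t. - g t) a * exp (P b - P a) \<le> (\<lambda>t. - g t) b"
  proof (rule linear_differential_inequality_lower[OF assms(1,2) _ P])
    fix t assume "t \<in> {a..b}"
    show "((\<lambda>t. - g t) has_real_derivative - g' t) (at t within S)"
      using g[OF \<open>t \<in> {a..b}\<close>] by (rule DERIV_minus)
    show "p t * - g t \<le> - g' t"
      using ineq[OF \<open>t \<in> {a..b}\<close>] by simp
  qed
  then show ?thesis
    by simp
qed

lemma exp_growth_lower:
  fixes g g' :: "real \<Rightarrow> real"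
  assumes "a \<le> b" "{a..b} \<subseteq> S"
    and "\<And>t. t \<in> {a..b} \<Longrightarrow> (g has_real_derivative g' t) (at t within S)"
    and "\<And>t. t \<in> {a..b} \<Longrightarrow> c * g t \<le> g' t"
  shows "g a * exp (c * (b - a)) \<le> g b"
  using linear_differential_inequality_lower[OF assms(1-3), of "\<lambda>t. c * t" "\<lambda>_. c"] assms(4)
  by (simp add: right_diff_distrib)

lemma exp_growth_upper:
  fixes g g' :: "real \<Rightarrow> real"
  assumes "a \<le> b" "{a..b} \<subseteq> S"
    and "\<And>t. t \<in> {a..b} \<Longrightarrow> (g has_real_derivative g' t) (at t within S)"
    and "\<And>t. t \<in> {a..b} \<Longrightarrow> g' t \<le> c * g t"
  shows "g b \<le> g a * exp (c * (b - a))"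
  using linear_differential_inequality_upper[OF assms(1-3), of "\<lambda>t. c * t" "\<lambda>_. c"] assms(4)
  by (simp add: right_diff_distrib)

lemma continuous_on_pos_invariant:
  fixes g :: "real \<Rightarrow> real"
  assumes cont: "continuous_on {0..} g" and "g 0 > 0"
    and step: "\<And>t. t > 0 \<Longrightarrow> (\<And>s. s \<in> {0..t} \<Longrightarrow> g s \<ge> 0) \<Longrightarrow> g t > 0"
    and "t \<ge> 0"
  shows "g t > 0"
proof (rule ccontr)
  assume "\<not> g t > 0"
  have zero_before: "\<exists>z\<in>{0..r}. g z = 0" if "0 \<le> r" "g r \<le> 0" for r
    using IVT2'[of g r 0 0] that \<open>g 0 > 0\<close> continuous_on_subset[OF cont, of "{0..r}"] by auto
  let ?Z = "{0..} \<inter> g -` {0}"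
  have "closed ?Z"
    by (rule continuous_closed_preimage[OF cont]) auto
  moreover have "?Z \<noteq> {}"
    using zero_before[of t] \<open>t \<ge> 0\<close> \<open>\<not> g t > 0\<close> by auto
  moreover have bdd: "bdd_below ?Z"
    by (rule bdd_belowI[of _ 0]) auto
  ultimately have first_zero: "Inf ?Z \<in> ?Z"
    by (intro closed_contains_Inf)
  then have "Inf ?Z > 0"
    using \<open>g 0 > 0\<close> by (cases "Inf ?Z = 0") auto
  moreover have "g s \<ge> 0" if s: "s \<in> {0..Inf ?Z}" for s
  proof (rule ccontr)
    assume "\<not> g s \<ge> 0"
    then obtain z where "z \<in> {0..s}" "g z = 0"
      using zero_before[of s] s by force
    then have "Inf ?Z \<le> z"
      using bdd by (intro cInf_lower) auto
    then have "s = Inf ?Z"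
      using \<open>z \<in> {0..s}\<close> s by auto
    then show False
      using first_zero \<open>\<not> g s \<ge> 0\<close> by auto
  qed
  ultimately have "g (Inf ?Z) > 0"
    using step by blast
  with first_zero show False
    by auto
qed

lemma ln_powr_sum_deviation:
  fixes c1 c2 p q x :: real
  assumes "c1 > 0" "c2 > 0" "x \<ge> 1"
  shows "\<bar>ln (c1 * x powr - p + c2 * x powr - q) + min p q * ln x\<bar>
           \<le> \<bar>ln (min c1 c2)\<bar> + \<bar>ln (c1 + c2)\<bar>"
proof -
  define y where "y = x powr - min p q"
  define S where "S = c1 * x powr - p + c2 * x powr - q"
  have y: "y > 0" "ln y = - min p q * ln x"
    using \<open>x \<ge> 1\<close> by (simp_all add: y_def ln_powr)
  have le_y: "x powr - p \<le> y" "x powr - q \<le> y"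
    using \<open>x \<ge> 1\<close> by (auto simp: y_def intro: powr_mono)
  have "min c1 c2 * y \<le> S"
  proof (cases "p \<le> q")
    case True
    then have "min c1 c2 * y \<le> c1 * x powr - p"
      by (simp add: y_def min_absorb1 mult_right_mono)
    then show ?thesis
      using assms by (simp add: S_def add_increasing2)
  next
    case False
    then have "min c1 c2 * y \<le> c2 * x powr - q"
      by (simp add: y_def min_absorb2 mult_right_mono)
    then show ?thesis
      using assms by (simp add: S_def add_increasing)
  qed
  moreover have "S \<le> (c1 + c2) * y"
    using le_y assms by (simp add: S_def distrib_right add_mono)
  moreover have pos: "min c1 c2 * y > 0"
    using assms y by simp
  ultimately have "ln (min c1 c2 * y) \<le> ln S" "ln S \<le> ln ((c1 + c2) * y)"
    using ln_mono by (blast, meson ln_mono order.strict_trans2)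
  moreover have "ln (min c1 c2 * y) = ln (min c1 c2) + ln y" "ln ((c1 + c2) * y) = ln (c1 + c2) + ln y"
    using assms y by (simp_all add: ln_mult)
  ultimately show ?thesis
    using y unfolding S_def by linarith
qed

lemma tendsto_divide_of_bounded_deviation:
  fixes z g :: "'a \<Rightarrow> real"
  assumes g: "filterlim g at_top F"
    and dev: "\<forall>\<^sub>F x in F. \<bar>z x - c * g x\<bar> \<le> E"
  shows "((\<lambda>x. z x / g x) \<longlongrightarrow> c) F"
proof -
  have lower: "((\<lambda>x. c - E / g x) \<longlongrightarrow> c) F" and upper: "((\<lambda>x. c + E / g x) \<longlongrightarrow> c) F"
    using tendsto_divide_0[OF tendsto_const filterlim_at_top_imp_at_infinity[OF g], of E]
    by (auto intro: tendsto_eq_intros)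
  have "\<forall>\<^sub>F x in F. c - E / g x \<le> z x / g x \<and> z x / g x \<le> c + E / g x"
    using dev filterlim_at_top_dense[THEN iffD1, OF g, rule_format, of 0]
  proof eventually_elim
    case (elim x)
    then have "(c * g x - E) / g x \<le> z x / g x" "z x / g x \<le> (c * g x + E) / g x"
      by (auto intro!: divide_right_mono simp: abs_le_iff)
    with \<open>g x > 0\<close> show ?case
      by (simp add: diff_divide_distrib add_divide_distrib)
  qed
  then have "\<forall>\<^sub>F x in F. c - E / g x \<le> z x / g x" "\<forall>\<^sub>F x in F. z x / g x \<le> c + E / g x"
    by (auto elim: eventually_mono)
  then show ?thesis
    by (rule tendsto_sandwich[OF _ _ lower upper])
qed


lemma tendsto_divide_ln_of_envelope_deviation:
  fixes z B :: "nat \<Rightarrow> real" and P :: "nat \<Rightarrow> bool"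
  assumes "\<mu> > 0" "lam > 0"
    and envelope: "\<And>n. n \<ge> 1 \<Longrightarrow> \<bar>ln (B n) + \<mu> * ln (real n)\<bar> \<le> C"
    and deviation: "\<And>n. n \<ge> 2 \<Longrightarrow> T \<le> - ln (B n) / lam \<Longrightarrow> P n \<and> \<bar>z n + ln (B n) / lam\<bar> \<le> E"
  shows "(\<forall>\<^sub>F n in sequentially. P n) \<and> (\<lambda>n. z n / ln (real n)) \<longlonglongrightarrow> \<mu> / lam"
proof -
  have ln_n: "filterlim (\<lambda>n. ln (real n)) at_top sequentially"
    by (rule filterlim_compose[OF ln_at_top filterlim_real_sequentially])
  have "\<forall>\<^sub>F n in sequentially. n \<ge> 2 \<and> (lam * T + C) / \<mu> \<le> ln (real n)"
    using eventually_ge_at_top ln_n[unfolded filterlim_at_top] by (intro eventually_conj) auto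
  then have "\<forall>\<^sub>F n in sequentially. P n \<and> \<bar>z n - \<mu> / lam * ln (real n)\<bar> \<le> E + C / lam"
  proof eventually_elim
    case (elim n)
    have "lam * T \<le> - ln (B n)"
      using elim envelope[of n] \<open>\<mu> > 0\<close> by (auto simp: pos_divide_le_eq abs_le_iff mult.commute)
    then have "T \<le> - ln (B n) / lam"
      by (subst pos_le_divide_eq[OF \<open>lam > 0\<close>]) (simp add: mult.commute)
    then have "P n" and close: "\<bar>z n + ln (B n) / lam\<bar> \<le> E"
      using deviation[of n] elim by auto
    have split: "z n - \<mu> / lam * ln (real n)
                   = (z n + ln (B n) / lam) - (ln (B n) + \<mu> * ln (real n)) / lam"
      using \<open>lam > 0\<close> by (simp add: field_simps)
    have "\<bar>(ln (B n) + \<mu> * ln (real n)) / lam\<bar> \<le> C / lam"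
      using envelope[of n] elim \<open>lam > 0\<close> by (simp add: divide_right_mono)
    then have "\<bar>z n - \<mu> / lam * ln (real n)\<bar> \<le> E + C / lam"
      unfolding split by (rule order_trans[OF abs_triangle_ineq4 add_mono[OF close]])
    with \<open>P n\<close> show ?case ..
  qed
  then have "\<forall>\<^sub>F n in sequentially. P n"
    and "\<forall>\<^sub>F n in sequentially. \<bar>z n - \<mu> / lam * ln (real n)\<bar> \<le> E + C / lam"
    by (simp_all only: eventually_conj_iff)
  with tendsto_divide_of_bounded_deviation[OF ln_n] show ?thesis
    by blast
qed

text \<open>The constants below depend only on the rates, not on the data a, b of the individual
  system; this is what makes the hitting-time error uniform in n.\<close>

locale growth_rates =
  fixes l0 d1 k lam :: real
  assumes l0_neg: "l0 < 0" and d1_pos: "d1 > 0" and k_gt_1: "k > 1" and lam_pos: "lam > 0"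
begin

definition settling_time :: real where
  "settling_time = max 1 (ln ((k - 1) / 2) / l0)"

definition late_rate :: real where
  "late_rate = lam * (k - 1) / (2 * k)"

definition early_gain :: real where
  "early_gain = min (exp (- d1)) (lam * exp l0 * (1 - exp (- d1)) / d1)"

definition floor_level :: real where
  "floor_level = early_gain * exp (- lam - lam / (k * - l0) - 1)"

definition escape_delay :: real where
  "escape_delay = max 0 (ln (1 / (k * floor_level)) / late_rate)"

definition hitting_error :: real where
  "hitting_error = max (ln k / lam) escape_delay"

lemma late_rate_pos: "late_rate > 0"
  using lam_pos k_gt_1 by (simp add: late_rate_def)

lemma floor_level_pos: "floor_level > 0"
  using d1_pos lam_pos by (simp add: floor_level_def early_gain_def)

lemma settling_time_properties:
  assumes "settling_time \<le> T"
  shows "1 \<le> T" and "exp (l0 * T) \<le> (k - 1) / 2"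
proof -
  show "1 \<le> T"
    using assms by (simp add: settling_time_def)
  have "ln ((k - 1) / 2) / l0 \<le> T"
    using assms by (simp add: settling_time_def)
  then have "l0 * T \<le> ln ((k - 1) / 2)"
    using l0_neg by (simp add: divide_le_eq mult.commute)
  then show "exp (l0 * T) \<le> (k - 1) / 2"
    using k_gt_1 by (metis exp_le_cancel_iff exp_ln diff_gt_0_iff_gt half_gt_zero)
qed

end

locale recurrence_system = growth_rates +
  fixes a b :: real and phi :: "real \<Rightarrow> real \<Rightarrow> real" and v u :: "real \<Rightarrow> real"
  assumes a_pos: "a > 0" and b_pos: "b > 0" and b_less: "b < 1 / k"
    and phi_ge_neg_d1: "\<And>x y. x \<ge> 0 \<Longrightarrow> y \<ge> 0 \<Longrightarrow> - d1 \<le> phi x y"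
    and phi_le: "\<And>x y. x \<ge> 0 \<Longrightarrow> y \<ge> 0 \<Longrightarrow> phi x y \<le> lam"
    and phi_ge_linear: "\<And>x y. x \<ge> 0 \<Longrightarrow> y \<ge> 0 \<Longrightarrow> lam * (1 - (x + y)) \<le> phi x y"
    and v_deriv: "\<And>t. t \<ge> 0 \<Longrightarrow> (v has_real_derivative l0 * v t) (at t within {0..})"
    and u_deriv: "\<And>t. t \<ge> 0 \<Longrightarrow>
                   (u has_real_derivative phi (v t) (u t) * u t + a * v t) (at t within {0..})"
    and v_0: "v 0 = 1 / k" and u_0: "u 0 = b"
begin

lemma v_eq: "t \<ge> 0 \<Longrightarrow> v t = exp (l0 * t) / k"
  using exp_growth_lower[of 0 t "{0..}" v "\<lambda>t. l0 * v t" l0]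
    exp_growth_upper[of 0 t "{0..}" v "\<lambda>t. l0 * v t" l0] v_deriv v_0
  by (force simp: mult.commute)

lemma v_pos: "t \<ge> 0 \<Longrightarrow> v t > 0"
  using v_eq k_gt_1 by simp

lemma v_antimono: "0 \<le> s \<Longrightarrow> s \<le> t \<Longrightarrow> v t \<le> v s"
  using v_eq[of s] v_eq[of t] l0_neg k_gt_1 by (simp add: divide_right_mono)

lemma u_continuous: "continuous_on {0..} u"
  using u_deriv by (intro DERIV_continuous_on) auto

lemma u_pos: "t \<ge> 0 \<Longrightarrow> u t > 0"
proof (rule continuous_on_pos_invariant[OF u_continuous])
  show "u 0 > 0"
    using u_0 b_pos by simp
next
  fix t :: real assume "t > 0" and u_nonneg: "\<And>s. s \<in> {0..t} \<Longrightarrow> u s \<ge> 0"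
  have "- d1 * u s \<le> phi (v s) (u s) * u s + a * v s" if "s \<in> {0..t}" for s
  proof -
    have "- d1 * u s \<le> phi (v s) (u s) * u s"
      using phi_ge_neg_d1[of "v s" "u s"] u_nonneg[OF that] v_pos[of s] that
      by (intro mult_right_mono) auto
    with a_pos v_pos[of s] that show ?thesis
      by (simp add: add_increasing2)
  qed
  then have "u 0 * exp (- d1 * (t - 0)) \<le> u t"
    using \<open>t > 0\<close> u_deriv by (intro exp_growth_lower[where S = "{0..}"]) auto
  then show "u t > 0"
    using u_0 b_pos by (smt (verit) exp_gt_zero mult_pos_pos)
qed

definition envelope :: real where
  "envelope = b + a / (k * lam)"

lemma envelope_pos: "envelope > 0"
  using a_pos b_pos k_gt_1 lam_pos by (simp add: envelope_def add_pos_pos)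

lemma u_le_envelope:
  assumes "t \<ge> 0"
  shows "u t \<le> envelope * exp (lam * t)"
proof -
  define c where "c = a / (k * lam)"
  have "phi (v s) (u s) * u s + a * v s \<le> lam * (u s + c)" if "s \<in> {0..t}" for s
  proof -
    have "phi (v s) (u s) * u s \<le> lam * u s"
      using phi_le[of "v s" "u s"] u_pos[of s] v_pos[of s] that by (intro mult_right_mono) auto
    moreover have "a * v s \<le> a * (1 / k)"
      using v_antimono[of 0 s] v_0 a_pos that by (intro mult_left_mono) auto
    then have "a * v s \<le> lam * c"
      using lam_pos by (simp add: c_def ac_simps)
    ultimately show ?thesis
      by (simp add: distrib_left)
  qed
  then have "u t + c \<le> (u 0 + c) * exp (lam * (t - 0))"
    using assms u_deriv
    by (intro exp_growth_upper[where g = "\<lambda>t. u t + c" and S = "{0..}"])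
       (auto intro!: derivative_eq_intros)
  moreover have "c \<ge> 0"
    using a_pos k_gt_1 lam_pos by (simp add: c_def)
  ultimately show ?thesis
    using u_0 by (simp add: envelope_def c_def)
qed

lemma hitting_time_ge:
  assumes "t \<ge> 0" and "u t = 1 / k"
  shows "(- ln envelope - ln k) / lam \<le> t"
proof -
  have "ln (1 / k) \<le> ln (envelope * exp (lam * t))"
    using u_le_envelope[OF assms(1)] assms(2) k_gt_1 by (intro ln_mono) auto
  then have "- ln k \<le> ln envelope + lam * t"
    using envelope_pos k_gt_1 by (simp add: ln_mult ln_div)
  then show ?thesis
    using lam_pos by (simp add: divide_le_eq mult.commute)
qed

lemma u_1_ge: "early_gain * envelope \<le> u 1"
proof -
  define c where "c = a * exp l0 / (k * d1)"
  have "- d1 * (u s - c) \<le> phi (v s) (u s) * u s + a * v s" if "s \<in> {0..1}" for s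
  proof -
    have "- d1 * u s \<le> phi (v s) (u s) * u s"
      using phi_ge_neg_d1[of "v s" "u s"] u_pos[of s] v_pos[of s] that
      by (intro mult_right_mono) auto
    moreover have "exp l0 / k \<le> v s"
      using v_antimono[of s 1] v_eq[of 1] that by simp
    then have "a * (exp l0 / k) \<le> a * v s"
      using a_pos by (intro mult_left_mono) auto
    then have "d1 * c \<le> a * v s"
      using d1_pos by (simp add: c_def)
    ultimately show ?thesis
      by (simp add: algebra_simps)
  qed
  then have "(u 0 - c) * exp (- d1 * (1 - 0)) \<le> u 1 - c"
    using u_deriv
    by (intro exp_growth_lower[where g = "\<lambda>t. u t - c" and S = "{0..}"])
       (auto intro!: derivative_eq_intros)
  then have "b * exp (- d1) + c * (1 - exp (- d1)) \<le> u 1"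
    using u_0 by (simp add: algebra_simps)
  moreover have "early_gain * b \<le> b * exp (- d1)"
    using b_pos by (simp add: early_gain_def mult.commute mult_left_mono)
  moreover have "early_gain * (a / (k * lam)) \<le> c * (1 - exp (- d1))"
  proof -
    have "early_gain * (a / (k * lam)) \<le> lam * exp l0 * (1 - exp (- d1)) / d1 * (a / (k * lam))"
      using a_pos k_gt_1 lam_pos by (intro mult_right_mono) (auto simp: early_gain_def)
    also have "\<dots> = c * (1 - exp (- d1))"
      using lam_pos by (simp add: c_def ac_simps)
    finally show ?thesis .
  qed
  ultimately show ?thesis
    by (simp add: envelope_def distrib_left)
qed

lemma floor_level_le_u:
  assumes "1 \<le> T" and T: "envelope * exp (lam * T) = 1"
  shows "floor_level \<le> u T"
proof -
  define P where "P s = lam * s - lam / (k * l0) * exp (l0 * s) - envelope * exp (lam * s)" for s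
  have P_deriv: "(P has_real_derivative lam * (1 - (exp (l0 * s) / k + envelope * exp (lam * s))))
                   (at s within {0..})" for s
    unfolding P_def[abs_def] using l0_neg k_gt_1
    by (auto intro!: derivative_eq_intros simp: field_simps)
  have "lam * (1 - (exp (l0 * s) / k + envelope * exp (lam * s))) * u s
          \<le> phi (v s) (u s) * u s + a * v s" if "s \<in> {1..T}" for s
  proof -
    have "lam * (1 - (exp (l0 * s) / k + envelope * exp (lam * s))) \<le> lam * (1 - (v s + u s))"
      using v_eq[of s] u_le_envelope[of s] lam_pos that by (intro mult_left_mono) auto
    also have "\<dots> \<le> phi (v s) (u s)"
      using phi_ge_linear[of "v s" "u s"] v_pos[of s] u_pos[of s] that by auto
    finally have "lam * (1 - (exp (l0 * s) / k + envelope * exp (lam * s))) * u s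
                    \<le> phi (v s) (u s) * u s"
      using u_pos[of s] that by (intro mult_right_mono) auto
    moreover have "a * v s \<ge> 0"
      using v_pos[of s] a_pos that by simp
    ultimately show ?thesis
      by linarith
  qed
  then have growth: "u 1 * exp (P T - P 1) \<le> u T"
    using \<open>1 \<le> T\<close> u_deriv P_deriv
    by (intro linear_differential_inequality_lower[where S = "{0..}"
          and g' = "\<lambda>t. phi (v t) (u t) * u t + a * v t"]) auto
  have "- 1 \<le> exp (l0 * T) - exp l0"
    using l0_neg by (smt (verit) exp_gt_zero exp_le_one_iff)
  then have "lam / (k * - l0) * (- 1) \<le> lam / (k * - l0) * (exp (l0 * T) - exp l0)"
    using l0_neg k_gt_1 lam_pos
    by (intro mult_left_mono) (auto intro!: divide_nonneg_neg mult_pos_neg)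
  moreover have "P T - P 1 = lam * T - lam + lam / (k * - l0) * (exp (l0 * T) - exp l0)
                              - envelope * exp (lam * T) + envelope * exp lam"
    using l0_neg k_gt_1 by (simp add: P_def field_simps)
  moreover have "envelope * exp lam \<ge> 0"
    using envelope_pos by simp
  ultimately have increment: "lam * T - lam - lam / (k * - l0) - 1 \<le> P T - P 1"
    using T by linarith
  have "floor_level = early_gain * (envelope * exp (lam * T)) * exp (- lam - lam / (k * - l0) - 1)"
    using T by (simp add: floor_level_def)
  also have "\<dots> = early_gain * envelope * exp (lam * T + (- lam - lam / (k * - l0) - 1))"
    by (simp add: exp_add mult.assoc)
  also have "\<dots> \<le> u 1 * exp (P T - P 1)"
    using u_1_ge increment floor_level_pos u_pos[of 1]
    by (intro mult_mono) (auto simp: floor_level_def)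
  finally show ?thesis
    using growth by linarith
qed

lemma u_late_growth:
  assumes "settling_time \<le> T" "D \<ge> 0" and below: "\<And>s. s \<in> {T..T + D} \<Longrightarrow> u s \<le> 1 / k"
  shows "u T * exp (late_rate * D) \<le> u (T + D)"
proof -
  have T: "T \<ge> 0" "exp (l0 * T) \<le> (k - 1) / 2"
    using settling_time_properties[OF assms(1)] by auto
  have "late_rate * u s \<le> phi (v s) (u s) * u s + a * v s" if s: "s \<in> {T..T + D}" for s
  proof -
    have "v s \<le> exp (l0 * T) / k"
      using v_antimono[of T s] v_eq[of T] T s by auto
    also have "\<dots> \<le> ((k - 1) / 2) / k"
      using T k_gt_1 by (intro divide_right_mono) auto
    finally have "v s \<le> (k - 1) / (2 * k)"
      by simp
    moreover have "1 - (k - 1) / (2 * k) - 1 / k = (k - 1) / (2 * k)"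
      using k_gt_1 by (simp add: field_simps)
    ultimately have "(k - 1) / (2 * k) \<le> 1 - (v s + u s)"
      using below[OF s] by linarith
    then have "lam * ((k - 1) / (2 * k)) \<le> lam * (1 - (v s + u s))"
      using lam_pos by (intro mult_left_mono) auto
    then have "late_rate \<le> lam * (1 - (v s + u s))"
      by (simp add: late_rate_def)
    also have "\<dots> \<le> phi (v s) (u s)"
      using phi_ge_linear[of "v s" "u s"] v_pos[of s] u_pos[of s] T s by auto
    finally have "late_rate * u s \<le> phi (v s) (u s) * u s"
      using u_pos[of s] T s by (intro mult_right_mono) auto
    moreover have "a * v s \<ge> 0"
      using v_pos[of s] a_pos T s by simp
    ultimately show ?thesis
      by linarith
  qed
  then show ?thesis
    using exp_growth_lower[of T "T + D" "{0..}" u "\<lambda>t. phi (v t) (u t) * u t + a * v t" late_rate]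
      u_deriv T \<open>D \<ge> 0\<close> by auto
qed

lemma u_hits_level:
  assumes "settling_time \<le> - ln envelope / lam"
  shows "\<exists>t>0. t \<le> - ln envelope / lam + escape_delay \<and> u t = 1 / k"
proof -
  define T where "T = - ln envelope / lam"
  have "settling_time \<le> T"
    using assms by (simp add: T_def)
  then have "1 \<le> T"
    by (rule settling_time_properties)
  have "envelope * exp (lam * T) = 1"
    using envelope_pos lam_pos by (simp add: T_def exp_minus)
  then have "floor_level \<le> u T"
    using floor_level_le_u \<open>1 \<le> T\<close> by blast
  obtain s where s: "0 \<le> s" "s \<le> T + escape_delay" "1 / k \<le> u s"
  proof (cases "\<forall>s \<in> {T..T + escape_delay}. u s \<le> 1 / k")
    case True
    have "1 / k \<le> floor_level * exp (late_rate * escape_delay)"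
    proof -
      have "ln (1 / (k * floor_level)) / late_rate \<le> escape_delay"
        by (simp add: escape_delay_def)
      then have "ln (1 / (k * floor_level)) \<le> late_rate * escape_delay"
        using late_rate_pos by (simp add: pos_divide_le_eq mult.commute)
      then have "exp (ln (1 / (k * floor_level))) \<le> exp (late_rate * escape_delay)"
        by simp
      then have "1 / (k * floor_level) \<le> exp (late_rate * escape_delay)"
        using floor_level_pos k_gt_1 by simp
      then show ?thesis
        using floor_level_pos k_gt_1 by (simp add: field_simps)
    qed
    also have "\<dots> \<le> u T * exp (late_rate * escape_delay)"
      using \<open>floor_level \<le> u T\<close> by simp
    also have "\<dots> \<le> u (T + escape_delay)"
      using u_late_growth[OF \<open>settling_time \<le> T\<close>] True by (simp add: escape_delay_def)
    finally show ?thesis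
      using that[of "T + escape_delay"] \<open>1 \<le> T\<close> by (simp add: escape_delay_def)
  next
    case False
    then obtain s where "s \<in> {T..T + escape_delay}" "\<not> u s \<le> 1 / k"
      by blast
    then show ?thesis
      using that[of s] \<open>1 \<le> T\<close> by auto
  qed
  moreover have "continuous_on {0..s} u"
    using continuous_on_subset[OF u_continuous] by auto
  ultimately obtain t where t: "0 \<le> t" "t \<le> s" "u t = 1 / k"
    using IVT'[of u 0 "1 / k" s] u_0 b_less by auto
  moreover have "t \<noteq> 0"
    using t u_0 b_less by auto
  ultimately show ?thesis
    using s by (intro exI[of _ t]) (auto simp: T_def)
qed

lemma recurrence_time_deviation:
  assumes "settling_time \<le> - ln envelope / lam"
  shows "{t. t > 0 \<and> u t = 1 / k} \<noteq> {}"
    and "\<bar>recurrence_time u (1 / k) + ln envelope / lam\<bar> \<le> hitting_error"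
proof -
  let ?H = "{t. t > 0 \<and> u t = 1 / k}"
  obtain t where t: "t > 0" "t \<le> - ln envelope / lam + escape_delay" "u t = 1 / k"
    using u_hits_level[OF assms] by blast
  then show "?H \<noteq> {}"
    by auto
  have "bdd_below ?H"
    by (rule bdd_belowI[of _ 0]) auto
  then have "recurrence_time u (1 / k) \<le> t"
    using t by (auto simp: recurrence_time_def intro: cInf_lower)
  moreover have "(- ln envelope - ln k) / lam \<le> recurrence_time u (1 / k)"
    using \<open>?H \<noteq> {}\<close> hitting_time_ge unfolding recurrence_time_def
    by (intro cInf_greatest) auto
  ultimately show "\<bar>recurrence_time u (1 / k) + ln envelope / lam\<bar> \<le> hitting_error"
    using t lam_pos by (auto simp: hitting_error_def diff_divide_distrib abs_le_iff)
qed

end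

theorem proposition3p1:
  fixes r0 d0 d1 k \<alpha> \<beta> :: real
    and f :: "real \<Rightarrow> real \<Rightarrow> real"
    and y0 y1 yb :: "nat \<Rightarrow> real \<Rightarrow> real"
  assumes r0: "r0 \<ge> 0" and d0: "d0 \<ge> 0" and lam0: "r0 - d0 < 0"
    and d1: "d1 > 0" and k: "k > 1"
    and alpha: "0 < \<alpha>" "\<alpha> < 1" and beta: "0 < \<beta>" "\<beta> < 1"
    and f_nonneg: "\<And>x y. x \<ge> 0 \<Longrightarrow> y \<ge> 0 \<Longrightarrow> f x y \<ge> 0"
    and A1: "\<exists>L. L-lipschitz_on ({0..} \<times> {0..}) (\<lambda>(x, y). f x y)"
    and A2a: "f 0 0 > d1"
    and A2b: "\<And>x y. x \<ge> 0 \<Longrightarrow> y \<ge> 0 \<Longrightarrow> x + y = 1 \<Longrightarrow> f x y = d1"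
    and A3: "\<exists>\<Phi> :: real \<Rightarrow> real. (\<forall>s t. 0 \<le> s \<longrightarrow> s \<le> t \<longrightarrow> \<Phi> t \<le> \<Phi> s)
               \<and> (\<forall>s. s \<ge> 0 \<longrightarrow> \<Phi> s \<ge> 0)
               \<and> (\<forall>x y. x \<ge> 0 \<longrightarrow> y \<ge> 0 \<longrightarrow> f x y = \<Phi> (x + y))"
    and A4x: "\<And>y. y \<ge> 0 \<Longrightarrow> ((\<lambda>x. f x y) \<longlongrightarrow> 0) at_top"
    and A4y: "\<And>x. x \<ge> 0 \<Longrightarrow> ((\<lambda>y. f x y) \<longlongrightarrow> 0) at_top"
    and A5: "\<And>x y. x \<ge> 0 \<Longrightarrow> y \<ge> 0 \<Longrightarrow> f x y \<ge> (f 0 0 - d1) * (1 - (x + y)) + d1"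
    and ode0: "\<And>n t. n \<ge> 1 \<Longrightarrow> t \<ge> 0 \<Longrightarrow>
                 (y0 n has_real_derivative (r0 - d0) * y0 n t) (at t within {0..})"
    and ode1: "\<And>n t. n \<ge> 1 \<Longrightarrow> t \<ge> 0 \<Longrightarrow>
                 (y1 n has_real_derivative
                    (f (y0 n t) (y1 n t) - d1) * y1 n t + real n powr (- \<alpha>) * y0 n t)
                 (at t within {0..})"
    and odeb: "\<And>n t. n \<ge> 1 \<Longrightarrow> t \<ge> 0 \<Longrightarrow>
                 (yb n has_real_derivative (f (y0 n t) (y1 n t) - d1) * yb n t) (at t within {0..})"
    and init0: "\<And>n. n \<ge> 1 \<Longrightarrow> y0 n 0 = real n / (k * real n)"
    and init1: "\<And>n. n \<ge> 1 \<Longrightarrow> y1 n 0 = real n powr \<beta> / (k * real n)"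
    and initb: "\<And>n. n \<ge> 1 \<Longrightarrow> yb n 0 = real n powr \<beta> / (k * real n)"
  shows "(\<forall>\<^sub>F n in sequentially. {t. t > 0 \<and> y1 n t = real n / (k * real n)} \<noteq> {})
       \<and> ((\<lambda>n. recurrence_time (y1 n) (real n / (k * real n)) / ln (real n))
            \<longlonglongrightarrow> min (1 - \<beta>) \<alpha> / (f 0 0 - d1))"
proof -
  text \<open>Only f \<ge> 0, (A3) in the form f \<le> f 0 0, and (A5) enter the comparison argument.\<close>
  define lam where "lam = f 0 0 - d1"
  define \<mu> where "\<mu> = min (1 - \<beta>) \<alpha>"
  define B where "B n = real n powr \<beta> / (k * real n) + real n powr - \<alpha> / (k * lam)" for n :: nat
  define C where "C = \<bar>ln (min (1 / k) (1 / (k * lam)))\<bar> + \<bar>ln (1 / k + 1 / (k * lam))\<bar>"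
  obtain \<Phi> :: "real \<Rightarrow> real" where \<Phi>: "\<forall>s t. 0 \<le> s \<longrightarrow> s \<le> t \<longrightarrow> \<Phi> t \<le> \<Phi> s"
    "\<forall>x y. x \<ge> 0 \<longrightarrow> y \<ge> 0 \<longrightarrow> f x y = \<Phi> (x + y)"
    using A3 by blast
  have f_le: "f x y \<le> f 0 0" if "x \<ge> 0" "y \<ge> 0" for x y
    using \<Phi> that by (metis add_nonneg_nonneg order_refl add_0)
  interpret growth_rates "r0 - d0" d1 k lam
    using lam0 d1 k A2a by unfold_locales (simp_all add: lam_def)
  have deviation: "{t. t > 0 \<and> y1 n t = real n / (k * real n)} \<noteq> {}
      \<and> \<bar>recurrence_time (y1 n) (real n / (k * real n)) + ln (B n) / lam\<bar> \<le> hitting_error"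
    if "n \<ge> 2" and "settling_time \<le> - ln (B n) / lam" for n
  proof -
    have "real n powr \<beta> < real n powr 1"
      using that beta by (intro powr_less_mono) auto
    then have "real n powr \<beta> / (k * real n) < 1 / k"
      using that k by (simp add: field_simps)
    then interpret recurrence_system "r0 - d0" d1 k lam "real n powr - \<alpha>"
      "real n powr \<beta> / (k * real n)" "\<lambda>x y. f x y - d1" "y0 n" "y1 n"
      using that f_nonneg f_le A5 ode0 ode1 init0 init1 k
      by unfold_locales (auto simp: lam_def algebra_simps)
    have "envelope = B n"
      by (simp add: envelope_def B_def)
    then show ?thesis
      using recurrence_time_deviation that by simp
  qed
  have ln_B: "\<bar>ln (B n) + \<mu> * ln (real n)\<bar> \<le> C" if "n \<ge> 1" for n
  proof -
    have "B n = 1 / k * real n powr - (1 - \<beta>) + 1 / (k * lam) * real n powr - \<alpha>"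
      using that by (simp add: B_def powr_diff)
    then show ?thesis
      using ln_powr_sum_deviation[of "1 / k" "1 / (k * lam)" "real n" "1 - \<beta>" \<alpha>] that k A2a
      by (simp add: \<mu>_def C_def lam_def)
  qed
  have "\<mu> > 0"
    using alpha beta by (simp add: \<mu>_def)
  from tendsto_divide_ln_of_envelope_deviation[OF this lam_pos ln_B deviation] show ?thesis
    unfolding \<mu>_def lam_def .
qed

end
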